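(* Let $a,b\in\mathbb{C}$ and let $q$ be a nonzero number with $\lvert q\rvert\ne1$. (1) If $0<\lvert q\rvert<1$, then for all $z$ in a neighborhood of $0$, $$\mathrm{E}_q(a,b;z)=\prod_{k=0}^\infty\frac{1+b(1-q)q^kz}{1-a(1-q)q^kz}=\frac{\mathrm{E}_{1/q}(bz)}{\mathrm{E}_{1/q}(-az)},$$ where $\mathrm{E}_{1/q}(z)=\sum_{n=0}^\infty q^{\binom n2}\frac{z^n}{[n]_q!}=\prod_{n=0}^\infty\big(1+(1-q)q^nz\big)$. (2) If $\lvert q\rvert>1$, then for all $z$ in a neighborhood of $0$, $$\mathrm{E}_q(a,b;z)=\prod_{k=0}^\infty\frac{1-a(q^{-1}-1)q^{-k}z}{1+b(q^{-1}-1)q^{-k}z}.$$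
   Context: $[n]_q=\frac{1-q^n}{1-q}$, $[0]_q!=1$, $[n]_q!=\prod_{k=1}^n[k]_q$. $(a\oplus b)^0_{1,q}=1$, $(a\oplus b)^n_{1,q}=\prod_{i=0}^{n-1}(a+bq^i)$. $\mathrm{E}_q(a,b;z)=\sum_{n=0}^\infty(a\oplus b)^n_{1,q}\frac{z^n}{[n]_q!}$ (this is the $(1,u)$-deformed $(s,t)$-exponential with $(s,t)=(1+q,-q)$ and $u=q$). *)

theory Defs
  imports "HOL-Analysis.Analysis"
begin

definition qint :: "complex \<Rightarrow> nat \<Rightarrow> complex" where
  "qint q n = (1 - q ^ n) / (1 - q)"

definition qfact :: "complex \<Rightarrow> nat \<Rightarrow> complex" where
  "qfact q n = (\<Prod>k = 1..n. qint q k)"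

definition qpow :: "complex \<Rightarrow> complex \<Rightarrow> complex \<Rightarrow> nat \<Rightarrow> complex" where
  "qpow q a b n = (\<Prod>i<n. a + b * q ^ i)"

definition Eq :: "complex \<Rightarrow> complex \<Rightarrow> complex \<Rightarrow> complex \<Rightarrow> complex" where
  "Eq q a b z = (\<Sum>n. qpow q a b n * z ^ n / qfact q n)"

text \<open>E_{1/q}(z) = sum_n q^(n choose 2) z^n / [n]_q!  (the parameter passed is q).\<close>
definition Einv :: "complex \<Rightarrow> complex \<Rightarrow> complex" where
  "Einv q z = (\<Sum>n. q ^ (n choose 2) * z ^ n / qfact q n)"

end

theory Submission
  imports Defs
begin

(* Write E(z) = E_q(a,b;z) = sum c_n z^n with c_n = (a (+) b)^n_{1,q} / [n]_q!.  The recurrence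
   c_{n+1} (1 - q^(n+1)) = c_n (a + b q^n) (1 - q) bounds the c_n geometrically when |q| < 1,
   and on power series it is the functional equation E(z) (1 - a(1-q)z) = E(qz) (1 + b(1-q)z).
   Iterating it along z, qz, q^2 z, ... gives E(z) = E(q^N z) times the first N factors, and
   E(q^N z) -> E(0) = 1 by continuity at 0.  E_{1/q} is the case a = 0, b = 1, which yields the
   quotient form.  For |q| > 1 the recurrence is invariant under (q, a, b) -> (1/q, b, a),
   which reduces everything to the first case. *)

lemma qpow_Suc: "qpow q a b (Suc n) = qpow q a b n * (a + b * q ^ n)"
  by (simp add: qpow_def)

lemma qfact_Suc: "qfact q (Suc n) = qfact q n * qint q (Suc n)"
  by (simp add: qfact_def prod.nat_ivl_Suc')

lemma one_minus_power_Suc_nonzero: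
  fixes q :: "'a::real_normed_div_algebra"
  assumes "norm q \<noteq> 1"
  shows "1 - q ^ Suc n \<noteq> 0"
  using assms power_eq_1_iff[of q "Suc n"] by auto

lemma qfact_nonzero:
  assumes "norm q \<noteq> 1"
  shows "qfact q n \<noteq> 0"
proof (induction n)
  case (Suc n)
  have "q \<noteq> 1" using assms by auto
  then show ?case
    using Suc one_minus_power_Suc_nonzero[OF assms, of n] by (simp add: qfact_Suc qint_def)
qed (simp add: qfact_def)

lemma qpow_zero_one: "qpow q 0 1 n = q ^ (n choose 2)"
proof (induction n)
  case (Suc n)
  have "Suc n choose 2 = n + (n choose 2)"
    by (simp add: numeral_2_eq_2)
  then show ?case using Suc by (simp add: qpow_Suc power_add)
qed (simp add: qpow_def numeral_2_eq_2)

lemma Einv_eq_Eq: "Einv q z = Eq q 0 1 z"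
  by (simp add: Einv_def Eq_def qpow_zero_one)

definition Eq_coeff :: "complex \<Rightarrow> complex \<Rightarrow> complex \<Rightarrow> nat \<Rightarrow> complex" where
  "Eq_coeff q a b n = qpow q a b n / qfact q n"

lemma Eq_eq_powser: "Eq q a b z = (\<Sum>n. Eq_coeff q a b n * z ^ n)"
  by (simp add: Eq_def Eq_coeff_def)

lemma Eq_coeff_0 [simp]: "Eq_coeff q a b 0 = 1"
  by (simp add: Eq_coeff_def qpow_def qfact_def)

lemma Eq_0 [simp]: "Eq q a b 0 = 1"
  unfolding Eq_eq_powser powser_zero by simp

lemma Eq_coeff_Suc:
  assumes "norm q \<noteq> 1"
  shows "Eq_coeff q a b (Suc n) = Eq_coeff q a b n * ((a + b * q ^ n) * (1 - q) / (1 - q ^ Suc n))"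
proof -
  have "q \<noteq> 1" using assms by auto
  then show ?thesis
    using one_minus_power_Suc_nonzero[OF assms, of n] qfact_nonzero[OF assms, of n]
    by (simp add: Eq_coeff_def qpow_Suc qfact_Suc qint_def field_simps)
qed

lemma Eq_coeff_inverse:
  assumes "q \<noteq> 0" "norm q \<noteq> 1"
  shows "Eq_coeff q a b n = Eq_coeff (inverse q) b a n"
proof (induction n)
  case (Suc n)
  have "norm (inverse q) \<noteq> 1" using assms by (simp add: norm_inverse)
  moreover have "(a + b * q ^ n) * (1 - q) / (1 - q ^ Suc n)
      = (b + a * inverse q ^ n) * (1 - inverse q) / (1 - inverse q ^ Suc n)"
    using assms one_minus_power_Suc_nonzero[OF assms(2), of n]
    by (simp add: power_inverse field_simps)
  ultimately show ?case
    using Suc by (simp add: Eq_coeff_Suc assms(2))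
qed simp

lemma Eq_inverse:
  assumes "q \<noteq> 0" "norm q \<noteq> 1"
  shows "Eq q a b z = Eq (inverse q) b a z"
  by (simp add: Eq_eq_powser Eq_coeff_inverse[OF assms])

lemma norm_Eq_coeff_le:
  assumes "norm q < 1"
  shows "norm (Eq_coeff q a b n) \<le> ((norm a + norm b) * norm (1 - q) / (1 - norm q)) ^ n"
proof (induction n)
  case (Suc n)
  have "norm (q ^ n) \<le> 1"
    using assms by (simp add: norm_power power_le_one)
  then have "norm (b * q ^ n) \<le> norm b"
    by (simp add: norm_mult mult_left_le)
  then have num: "norm (a + b * q ^ n) \<le> norm a + norm b"
    by (meson add_left_mono norm_triangle_le)
  have "norm (q ^ Suc n) \<le> norm q"
    using assms by (simp add: norm_mult norm_power power_le_one mult_left_le)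
  then have den: "1 - norm q \<le> norm (1 - q ^ Suc n)"
    using norm_triangle_ineq2[of 1 "q ^ Suc n"] by simp
  define K where "K = (norm a + norm b) * norm (1 - q) / (1 - norm q)"
  have ratio: "norm ((a + b * q ^ n) * (1 - q) / (1 - q ^ Suc n)) \<le> K"
    unfolding K_def norm_divide norm_mult
    using assms num den by (intro frac_le mult_right_mono) auto
  have "norm (Eq_coeff q a b (Suc n))
      = norm (Eq_coeff q a b n) * norm ((a + b * q ^ n) * (1 - q) / (1 - q ^ Suc n))"
    using assms by (simp add: Eq_coeff_Suc norm_mult norm_divide)
  also have "\<dots> \<le> K ^ n * K"
    using Suc ratio assms by (intro mult_mono) (auto simp: K_def)
  finally show ?case by (simp add: K_def mult.commute)
qed simp

lemma Eq_summable:
  assumes "norm q < 1"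
  obtains R where "R > 0" "\<And>w. norm w < R \<Longrightarrow> summable (\<lambda>n. Eq_coeff q a b n * w ^ n)"
proof
  define K where "K = (norm a + norm b) * norm (1 - q) / (1 - norm q)"
  have K0: "0 \<le> K" using assms by (simp add: K_def)
  show "1 / (K + 1) > 0" using K0 by simp
  fix w :: complex
  assume w: "norm w < 1 / (K + 1)"
  show "summable (\<lambda>n. Eq_coeff q a b n * w ^ n)"
  proof (rule summable_comparison_test')
    have "K * norm w \<le> (K + 1) * norm w"
      by (simp add: distrib_right)
    also have "\<dots> < 1"
      using w K0 by (simp add: field_simps)
    finally have "K * norm w < 1" .
    then show "summable (\<lambda>n. (K * norm w) ^ n)"
      using K0 by (intro summable_geometric) simp
    show "norm (Eq_coeff q a b n * w ^ n) \<le> (K * norm w) ^ n" for n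
    proof -
      have "norm (Eq_coeff q a b n * w ^ n) = norm (Eq_coeff q a b n) * norm w ^ n"
        by (simp add: norm_mult norm_power)
      also have "\<dots> \<le> K ^ n * norm w ^ n"
        using norm_Eq_coeff_le[OF assms] unfolding K_def by (rule mult_right_mono) simp
      finally show ?thesis by (simp add: power_mult_distrib)
    qed
  qed
qed

lemma isCont_Eq_0:
  assumes "norm q < 1"
  shows "isCont (Eq q a b) 0"
proof -
  obtain R where R: "R > 0" "\<And>w. norm w < R \<Longrightarrow> summable (\<lambda>n. Eq_coeff q a b n * w ^ n)"
    using Eq_summable[OF assms] by blast
  have "isCont (\<lambda>z. \<Sum>n. Eq_coeff q a b n * z ^ n) 0"
    by (rule isCont_powser[of _ "of_real (R / 2)"]) (use R in auto)
  then show ?thesis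
    by (simp add: Eq_eq_powser[abs_def])
qed

lemma Eq_functional_equation:
  assumes "norm q \<noteq> 1"
    and summable_w: "summable (\<lambda>n. Eq_coeff q a b n * w ^ n)"
    and summable_qw: "summable (\<lambda>n. Eq_coeff q a b n * (q * w) ^ n)"
  shows "Eq q a b w * (1 - a * (1 - q) * w) = Eq q a b (q * w) * (1 + b * (1 - q) * w)"
proof -
  define c where "c = Eq_coeff q a b"
  have rec: "c (Suc n) * (w ^ Suc n - (q * w) ^ Suc n)
      = (1 - q) * w * (a * (c n * w ^ n) + b * (c n * (q * w) ^ n))" for n
  proof -
    have coeff: "c (Suc n) * (1 - q ^ Suc n) = c n * (a + b * q ^ n) * (1 - q)"
      using Eq_coeff_Suc[OF assms(1), of a b n] one_minus_power_Suc_nonzero[OF assms(1), of n]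
      by (simp add: c_def)
    have "c (Suc n) * (w ^ Suc n - (q * w) ^ Suc n) = c (Suc n) * (1 - q ^ Suc n) * w ^ Suc n"
      by (simp add: power_mult_distrib algebra_simps)
    also have "\<dots> = (1 - q) * w * (a * (c n * w ^ n) + b * (c n * (q * w) ^ n))"
      unfolding coeff by (simp add: power_mult_distrib algebra_simps)
    finally show ?thesis .
  qed
  have sw: "(\<lambda>n. c n * w ^ n) sums Eq q a b w"
    using summable_w by (simp add: c_def Eq_eq_powser summable_sums)
  have sqw: "(\<lambda>n. c n * (q * w) ^ n) sums Eq q a b (q * w)"
    using summable_qw by (simp add: c_def Eq_eq_powser summable_sums)
  have "(\<lambda>n. c n * (w ^ n - (q * w) ^ n)) sums (Eq q a b w - Eq q a b (q * w))"
    using sums_diff[OF sw sqw] by (simp add: right_diff_distrib)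
  then have "(\<lambda>n. c (Suc n) * (w ^ Suc n - (q * w) ^ Suc n)) sums (Eq q a b w - Eq q a b (q * w))"
    by (subst sums_Suc_iff) simp
  moreover have "(\<lambda>n. c (Suc n) * (w ^ Suc n - (q * w) ^ Suc n))
      sums ((1 - q) * w * (a * Eq q a b w + b * Eq q a b (q * w)))"
    unfolding rec by (intro sums_mult sums_add sums_mult sw sqw)
  ultimately have "Eq q a b w - Eq q a b (q * w) = (1 - q) * w * (a * Eq q a b w + b * Eq q a b (q * w))"
    by (rule sums_unique2)
  then show ?thesis by (simp add: algebra_simps)
qed

lemma telescoping_has_prod:
  fixes f g :: "nat \<Rightarrow> 'a::{real_normed_field,banach}"
  assumes lim: "g \<longlonglongrightarrow> 1"
    and step: "\<And>k. g k = g (Suc k) * f k"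
    and nonzero: "\<And>k. f k \<noteq> 0"
  shows "f has_prod g 0"
proof -
  have partial: "g 0 = g N * (\<Prod>k<N. f k)" for N
  proof (induction N)
    case (Suc N)
    then show ?case by (simp add: step[of N] ac_simps)
  qed simp
  have "g 0 \<noteq> 0"
  proof
    assume "g 0 = 0"
    then have "g = (\<lambda>_. 0)"
      using partial nonzero by (auto simp: fun_eq_iff)
    with lim show False
      by (simp add: LIMSEQ_const_iff)
  qed
  then have "g N \<noteq> 0" for N
    using partial[of N] by auto
  then have "(\<lambda>N. \<Prod>k<N. f k) = (\<lambda>N. g 0 / g N)"
    using partial by (simp add: fun_eq_iff eq_divide_eq mult.commute)
  moreover have "(\<lambda>N. g 0 / g N) \<longlonglongrightarrow> g 0"
    using tendsto_divide[OF tendsto_const lim] by simp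
  ultimately have "(\<lambda>N. \<Prod>k<N. f k) \<longlonglongrightarrow> g 0"
    by simp
  then have "(\<lambda>N. \<Prod>k<Suc N. f k) \<longlonglongrightarrow> g 0"
    by (rule LIMSEQ_Suc)
  then show ?thesis
    using \<open>g 0 \<noteq> 0\<close> by (simp add: has_prod_def raw_has_prod_def lessThan_Suc_atMost)
qed

lemma Eq_has_prod_at:
  assumes q: "norm q < 1"
    and summable: "\<And>w. norm w \<le> norm z \<Longrightarrow> summable (\<lambda>n. Eq_coeff q a b n * w ^ n)"
    and small_a: "norm (a * (1 - q) * z) < 1"
    and small_b: "norm (b * (1 - q) * z) < 1"
  shows "(\<lambda>k. (1 + b * (1 - q) * q ^ k * z) / (1 - a * (1 - q) * q ^ k * z)) has_prod Eq q a b z"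
proof -
  define F where "F = (\<lambda>k. (1 + b * (1 - q) * q ^ k * z) / (1 - a * (1 - q) * q ^ k * z))"
  have shrink: "norm (q ^ k * z) \<le> norm z" for k
    using q by (simp add: norm_mult norm_power power_le_one mult_left_le_one_le)
  have nonzero: "1 + c * q ^ k * z \<noteq> 0" if "norm (c * z) < 1" for c k
  proof
    assume "1 + c * q ^ k * z = 0"
    then have "c * (q ^ k * z) = - 1"
      by (simp add: mult.assoc eq_neg_iff_add_eq_0 add.commute)
    then have "norm (c * (q ^ k * z)) = 1"
      by simp
    moreover have "norm (c * (q ^ k * z)) \<le> norm (c * z)"
      using shrink[of k] by (simp add: norm_mult mult_left_mono)
    ultimately show False
      using that by simp
  qed
  have den: "1 - a * (1 - q) * q ^ k * z \<noteq> 0" for k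
    using nonzero[of "- (a * (1 - q))" k] small_a by simp
  have num: "1 + b * (1 - q) * q ^ k * z \<noteq> 0" for k
    using nonzero[of "b * (1 - q)" k] small_b by simp
  have "F has_prod Eq q a b (q ^ 0 * z)"
  proof (rule telescoping_has_prod)
    have "(\<lambda>k. q ^ k * z) \<longlonglongrightarrow> 0"
      using q by (intro tendsto_mult_left_zero LIMSEQ_power_zero)
    from isCont_tendsto_compose[OF isCont_Eq_0[OF q] this]
    show "(\<lambda>k. Eq q a b (q ^ k * z)) \<longlonglongrightarrow> 1"
      by simp
    show "F k \<noteq> 0" for k
      using den num by (simp add: F_def)
    show "Eq q a b (q ^ k * z) = Eq q a b (q ^ Suc k * z) * F k" for k
    proof -
      have "norm (q * (q ^ k * z)) \<le> norm z"
        using shrink[of "Suc k"] by (simp add: mult.assoc)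
      then have "Eq q a b (q ^ k * z) * (1 - a * (1 - q) * (q ^ k * z))
          = Eq q a b (q * (q ^ k * z)) * (1 + b * (1 - q) * (q ^ k * z))"
        using q shrink by (intro Eq_functional_equation summable) auto
      then show ?thesis
        using den[of k] by (simp add: F_def field_simps)
    qed
  qed
  then show ?thesis
    by (simp add: F_def)
qed

lemma eventually_nhds_0_scaled:
  fixes c :: "'a::real_normed_algebra"
  assumes "eventually P (nhds 0)"
  shows "\<forall>\<^sub>F z in nhds 0. P (c * z)"
proof -
  have "filterlim (\<lambda>z. c * z) (nhds 0) (nhds 0)"
    by (intro tendsto_mult_right_zero filterlim_ident)
  from eventually_compose_filterlim[OF assms this] show ?thesis .
qed

lemma eventually_nhds_0_norm_less:
  fixes e :: real
  assumes "e > 0"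
  shows "\<forall>\<^sub>F z :: 'a::real_normed_vector in nhds 0. norm z < e"
  using order_tendstoD(2)[OF tendsto_norm_zero[OF filterlim_ident] assms] .

lemma eventually_Eq_has_prod:
  assumes q: "norm q < 1"
  shows "\<forall>\<^sub>F z in nhds 0.
    (\<lambda>k. (1 + b * (1 - q) * q ^ k * z) / (1 - a * (1 - q) * q ^ k * z)) has_prod Eq q a b z"
proof -
  obtain R where R: "R > 0" "\<And>w. norm w < R \<Longrightarrow> summable (\<lambda>n. Eq_coeff q a b n * w ^ n)"
    using Eq_summable[OF q] by blast
  have "\<forall>\<^sub>F z in nhds 0. norm z < R"
    using R(1) by (rule eventually_nhds_0_norm_less)
  moreover have "\<forall>\<^sub>F z in nhds 0. norm (c * z) < 1" for c :: complex
    by (intro eventually_nhds_0_scaled eventually_nhds_0_norm_less) simp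
  ultimately have "\<forall>\<^sub>F z in nhds 0. norm z < R \<and> norm (a * (1 - q) * z) < 1 \<and> norm (b * (1 - q) * z) < 1"
    by (intro eventually_conj)
  then show ?thesis
  proof eventually_elim
    case (elim z)
    then show ?case
      using R(2) by (intro Eq_has_prod_at[OF q]) auto
  qed
qed

lemma eventually_Einv_has_prod:
  assumes "norm q < 1"
  shows "\<forall>\<^sub>F z in nhds 0. (\<lambda>n. 1 + (1 - q) * q ^ n * z) has_prod Einv q z"
  using eventually_Eq_has_prod[OF assms, where a = 0 and b = 1] by (simp add: Einv_eq_Eq)

theorem mainTheorem14:
  fixes a b q :: complex
  assumes "q \<noteq> 0" and "norm q \<noteq> 1"
  shows "(norm q < 1 \<longrightarrow>
            (\<forall>\<^sub>F z in nhds 0.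
               ((\<lambda>k. (1 + b * (1 - q) * q ^ k * z) / (1 - a * (1 - q) * q ^ k * z))
                  has_prod Eq q a b z) \<and>
               Eq q a b z = Einv q (b * z) / Einv q (- a * z) \<and>
               ((\<lambda>n. 1 + (1 - q) * q ^ n * z) has_prod Einv q z))) \<and>
         (norm q > 1 \<longrightarrow>
            (\<forall>\<^sub>F z in nhds 0.
               (\<lambda>k. (1 - a * (inverse q - 1) * (inverse q) ^ k * z) /
                     (1 + b * (inverse q - 1) * (inverse q) ^ k * z))
                  has_prod Eq q a b z))"
proof (intro conjI impI)
  assume q: "norm q < 1"
  note Einv = eventually_Einv_has_prod[OF q]
  show "\<forall>\<^sub>F z in nhds 0.
      ((\<lambda>k. (1 + b * (1 - q) * q ^ k * z) / (1 - a * (1 - q) * q ^ k * z)) has_prod Eq q a b z) \<and>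
      Eq q a b z = Einv q (b * z) / Einv q (- a * z) \<and>
      ((\<lambda>n. 1 + (1 - q) * q ^ n * z) has_prod Einv q z)"
    using eventually_Eq_has_prod[OF q, where a = a and b = b] Einv
      eventually_nhds_0_scaled[OF Einv, of b] eventually_nhds_0_scaled[OF Einv, of "- a"]
  proof eventually_elim
    case (elim z)
    from has_prod_divide[OF elim(3) elim(4)]
    have "(\<lambda>k. (1 + b * (1 - q) * q ^ k * z) / (1 - a * (1 - q) * q ^ k * z))
        has_prod (Einv q (b * z) / Einv q (- a * z))"
      by (simp add: algebra_simps)
    with elim show ?case
      using has_prod_unique2 by blast
  qed
next
  assume q: "norm q > 1"
  then have "norm (inverse q) < 1"
    by (simp add: norm_inverse inverse_less_1_iff)
  from eventually_Eq_has_prod[OF this, where a = b and b = a]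
  show "\<forall>\<^sub>F z in nhds 0.
      (\<lambda>k. (1 - a * (inverse q - 1) * (inverse q) ^ k * z) /
            (1 + b * (inverse q - 1) * (inverse q) ^ k * z)) has_prod Eq q a b z"
    by eventually_elim (simp add: Eq_inverse[OF assms] algebra_simps)
qed

end
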